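(* Consider the lifted multi-agent system described in the context, run with the dynamic edge weights of Algorithm 1 (MWN-PPAC). Then the system achieves asymptotic average consensus: $$\lim_{k\to\infty}\boldsymbol{x}(k)=\mathds{1}_n\otimes \mathrm{Avg}(\boldsymbol{x}(0)),\qquad \mathrm{Avg}(\boldsymbol{x}(0))=\frac1n\sum_{i=1}^n \boldsymbol{x}_i(0)\in\mathbb{R}^{D}.$$
   Context: Setting: $n>1$ agents, communication graph $\mathcal{G}=(\mathcal{V},\mathcal{E})$ with $\mathcal{V}=\{1,\dots,n\}$, undirected and connected; $\mathcal{N}_i=\{j:(i,j)\in\mathcal{E}\}$. Each agent originally has a real state in $\mathbb{R}^d$ and lifts it by prepending a virtual state in $\mathbb{R}^{d'}$ ($d'\ge 3$), giving $\boldsymbol{x}_i(k)\in\mathbb{R}^{D}$, $D=d+d'$ (first $d'$ coordinates virtual, last $d$ coordinates real). Update rule, with fixed $\sigma>0$: $$\boldsymbol{x}_i(k+1)=\boldsymbol{x}_i(k)+\sigma\sum_{j\in\mathcal{N}_i}A_{ij}(k)\big(\boldsymbol{x}_j(k)-\boldsymbol{x}_i(k)\big),\quad k\in\mathbb{N},$$ and $\boldsymbol{x}(k)=(\boldsymbol{x}_1(k)^\top,\dots,\boldsymbol{x}_n(k)^\top)^\top$. Auxiliary vectors: $\boldsymbol{v}_1,\dots,\boldsymbol{v}_D\in\mathbb{R}^D$ nonzero and mutually orthogonal, each with at least 2 nonzero entries, $\boldsymbol{v}_1$ having fewer than $d'$ nonzero entries, and all entries of $\boldsymbol{v}_D$ nonzero.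 Let $P_{\boldsymbol v}=\boldsymbol v\boldsymbol v^\top/(\boldsymbol v^\top\boldsymbol v)$. Edge weights (Algorithm 1): at $k=0$, $A_{ij}(0)=A_{ji}(0)\in\mathbb{R}^{D\times D}$ for each edge; if one endpoint is legitimate and the other honest-but-curious, $A_{ij}(0)=\alpha_{ij}P_{\boldsymbol v_1}+\beta_{ij}P_{\boldsymbol v_D}$ with $\alpha_{ij},\beta_{ij}>0$, otherwise $A_{ij}(0)$ is arbitrary. For $k\ge1$ and $(i,j)\in\mathcal{E}$: $A_{ij}(k)=A_{ji}(k)=\gamma_{ij}^{\rho(k)}P_{\boldsymbol v_{\rho(k)}}+\zeta_{ij}^{\rho(k)}P_{\boldsymbol v_D}$, where $d^*=D-1$, $\rho(k)=k \bmod d^*$ if this is nonzero and $\rho(k)=d^*$ otherwise, and $0<\gamma_{ij}^{\rho(k)},\zeta_{ij}^{\rho(k)}<\frac{1}{4(n-1)\sigma}$ (with $\gamma_{ij}=\gamma_{ji}$, $\zeta_{ij}=\zeta_{ji}$). $A_{ij}(k)=0$ if $(i,j)\notin\mathcal{E}$. *)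

theory Defs
  imports Complex_Main
begin

text \<open>Vectors in R^D are represented as functions nat => real, only the
  coordinates 0..D-1 being relevant; D x D matrices as nat => nat => real.
  Agents are indexed 0..n-1 (the paper uses 1..n); auxiliary vectors v_1..v_D
  are indexed 1..D as in the paper.\<close>

definition dotD :: "nat \<Rightarrow> (nat \<Rightarrow> real) \<Rightarrow> (nat \<Rightarrow> real) \<Rightarrow> real" where
  "dotD D u w = (\<Sum>c<D. u c * w c)"

definition projM :: "nat \<Rightarrow> (nat \<Rightarrow> real) \<Rightarrow> nat \<Rightarrow> nat \<Rightarrow> real" where
  "projM D v = (\<lambda>a b. v a * v b / dotD D v v)"

definition matvec :: "nat \<Rightarrow> (nat \<Rightarrow> nat \<Rightarrow> real) \<Rightarrow> (nat \<Rightarrow> real) \<Rightarrow> nat \<Rightarrow> real" where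
  "matvec D M y = (\<lambda>a. \<Sum>b<D. M a b * y b)"

definition nnz :: "nat \<Rightarrow> (nat \<Rightarrow> real) \<Rightarrow> nat" where
  "nnz D v = card {c. c < D \<and> v c \<noteq> 0}"

definition rho :: "nat \<Rightarrow> nat \<Rightarrow> nat" where
  "rho dstar k = (if k mod dstar \<noteq> 0 then k mod dstar else dstar)"

definition undirected_connected :: "nat \<Rightarrow> (nat \<times> nat) set \<Rightarrow> bool" where
  "undirected_connected n E \<longleftrightarrow>
     E \<subseteq> {..<n} \<times> {..<n} \<and> (\<forall>i j. (i,j) \<in> E \<longrightarrow> (j,i) \<in> E) \<and>
     (\<forall>i. (i,i) \<notin> E) \<and> (\<forall>i<n. \<forall>j<n. (i,j) \<in> E\<^sup>*)"

definition nbrs :: "(nat \<times> nat) set \<Rightarrow> nat \<Rightarrow> nat set" where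
  "nbrs E i = {j. (i,j) \<in> E}"

end

theory Submission
  imports Defs "HOL-Analysis.Convex" "Jordan_Normal_Form.Determinant"
begin

text \<open>The weight matrices are combinations of projections onto the mutually orthogonal vectors
  \<open>v\<^sub>l\<close>, so for \<open>k \<ge> 1\<close> every coordinate \<open>\<langle>v\<^sub>l, x\<^sub>i(k)\<rangle>\<close> evolves by a scalar consensus
  iteration with symmetric weights \<open>\<sigma>\<gamma>\<close>, \<open>\<sigma>\<zeta>\<close> or \<open>0\<close>: the direction \<open>v\<^sub>D\<close> is active at every
  step, the direction \<open>v\<^sub>l\<close>, \<open>l < D\<close>, once every \<open>D - 1\<close> steps. For a symmetric scalar iteration
  whose weights are at most \<open>1/(4(n-1))\<close>, the sum of the states is invariant and the squared
  deviation from the average drops by at least \<open>3/4\<close> of the weighted edge disagreement. Hence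
  the weighted disagreement tends to zero; along the steps where the weights are bounded below
  this forces neighbouring, and by connectivity all, states together, so the monotone deviation
  tends to zero. The arbitrary symmetric weights of step \<open>0\<close> still preserve the sum, and
  \<open>x\<^sub>i(k)\<close> is recovered from its coordinates in the orthogonal basis.\<close>

lemma sum_nbrs_eq_sum_edges:
  assumes "E \<subseteq> {..<n} \<times> {..<n}"
  shows "(\<Sum>i<n. \<Sum>j\<in>nbrs E i. f i j) = (\<Sum>(i,j)\<in>E. f i j)"
proof -
  have "finite (nbrs E i)" for i
    by (rule finite_subset[of _ "{..<n}"]) (use assms in \<open>auto simp: nbrs_def\<close>)
  then have "(\<Sum>i<n. \<Sum>j\<in>nbrs E i. f i j) = (\<Sum>(i,j)\<in>Sigma {..<n} (nbrs E). f i j)"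
    by (simp add: sum.Sigma)
  also have "Sigma {..<n} (nbrs E) = E"
    using assms by (auto simp: nbrs_def)
  finally show ?thesis .
qed

lemma sum_edges_swap:
  assumes "\<forall>i j. (i,j) \<in> E \<longrightarrow> (j,i) \<in> E"
  shows "(\<Sum>(i,j)\<in>E. f i j) = (\<Sum>(i,j)\<in>E. f j i)"
  by (rule sum.reindex_bij_witness[of _ prod.swap prod.swap]) (use assms in auto)

lemma sum_nbrs_antisym_eq_0:
  assumes "E \<subseteq> {..<n} \<times> {..<n}" "\<forall>i j. (i,j) \<in> E \<longrightarrow> (j,i) \<in> E"
    and "\<forall>i j. (i,j) \<in> E \<longrightarrow> f i j = - f j i"
  shows "(\<Sum>i<n. \<Sum>j\<in>nbrs E i. f i j) = (0::real)"
proof -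
  have "(\<Sum>(i,j)\<in>E. f i j) = (\<Sum>(i,j)\<in>E. f j i)"
    by (rule sum_edges_swap[OF assms(2)])
  also have "\<dots> = - (\<Sum>(i,j)\<in>E. f i j)"
    using assms(3) by (auto simp: sum_negf[symmetric] intro: sum.cong)
  finally show ?thesis
    by (simp add: sum_nbrs_eq_sum_edges[OF assms(1)])
qed

lemma weighted_Cauchy_Schwarz:
  fixes w b :: "'a \<Rightarrow> real"
  assumes "\<forall>j\<in>A. 0 \<le> w j"
  shows "(\<Sum>j\<in>A. w j * b j)\<^sup>2 \<le> (\<Sum>j\<in>A. w j) * (\<Sum>j\<in>A. w j * (b j)\<^sup>2)"
proof -
  have "(\<Sum>j\<in>A. w j * b j) = (\<Sum>j\<in>A. sqrt (w j) * (sqrt (w j) * b j))"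
    by (rule sum.cong) (use assms in \<open>auto simp: real_sqrt_mult[symmetric]\<close>)
  also have "(\<dots>)\<^sup>2 \<le> (\<Sum>j\<in>A. (sqrt (w j))\<^sup>2) * (\<Sum>j\<in>A. (sqrt (w j) * b j)\<^sup>2)"
    by (rule Cauchy_Schwarz_ineq_sum)
  also have "\<dots> = (\<Sum>j\<in>A. w j) * (\<Sum>j\<in>A. w j * (b j)\<^sup>2)"
    using assms by (simp add: power_mult_distrib)
  finally show ?thesis .
qed

lemma finite_positive_lower_bound:
  fixes f :: "'a \<Rightarrow> real"
  assumes "finite S" "\<forall>s\<in>S. 0 < f s"
  shows "\<exists>\<epsilon>>0. \<forall>s\<in>S. \<epsilon> \<le> f s"
  using assms by (intro exI[of _ "Min (insert 1 (f ` S))"]) auto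

subsection \<open>Scalar consensus with symmetric weights\<close>

definition edge_disagreement :: "(nat \<times> nat) set \<Rightarrow> (nat \<Rightarrow> nat \<Rightarrow> real) \<Rightarrow> (nat \<Rightarrow> real) \<Rightarrow> real"
  where "edge_disagreement E w y = (\<Sum>(i,j)\<in>E. w i j * (y i - y j)\<^sup>2)"

lemma edge_disagreement_nonneg:
  assumes "\<forall>i j. (i,j) \<in> E \<longrightarrow> 0 \<le> w i j"
  shows "0 \<le> edge_disagreement E w y"
  unfolding edge_disagreement_def using assms by (intro sum_nonneg) auto

lemma edge_disagreement_ge_edge:
  assumes "finite E" "(i,j) \<in> E" "\<forall>i j. (i,j) \<in> E \<longrightarrow> 0 \<le> w i j"
  shows "w i j * (y i - y j)\<^sup>2 \<le> edge_disagreement E w y"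
  unfolding edge_disagreement_def
  using member_le_sum[of "(i,j)" E "\<lambda>(i,j). w i j * (y i - y j)\<^sup>2"] assms by auto

lemma sum_nbrs_laplacian_quadratic_form:
  assumes "E \<subseteq> {..<n} \<times> {..<n}" "\<forall>i j. (i,j) \<in> E \<longrightarrow> (j,i) \<in> E"
    and "\<forall>i j. (i,j) \<in> E \<longrightarrow> w i j = w j i"
  shows "2 * (\<Sum>i<n. y i * (\<Sum>j\<in>nbrs E i. w i j * (y j - y i))) = - edge_disagreement E w y"
proof -
  define S where "S = (\<Sum>(i,j)\<in>E. w i j * (y i * (y j - y i)))"
  have "(\<Sum>i<n. y i * (\<Sum>j\<in>nbrs E i. w i j * (y j - y i))) = S"
    unfolding S_def sum_nbrs_eq_sum_edges[OF assms(1), symmetric]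
    by (simp add: sum_distrib_left algebra_simps)
  moreover have "S = (\<Sum>(i,j)\<in>E. w j i * (y j * (y i - y j)))"
    unfolding S_def by (rule sum_edges_swap[OF assms(2)])
  moreover have "\<dots> = (\<Sum>(i,j)\<in>E. w i j * (y j * (y i - y j)))"
    using assms(3) by (intro sum.cong refl) (auto, metis)
  ultimately have "2 * (\<Sum>i<n. y i * (\<Sum>j\<in>nbrs E i. w i j * (y j - y i)))
      = (\<Sum>(i,j)\<in>E. w i j * (y i * (y j - y i)) + w i j * (y j * (y i - y j)))"
    unfolding S_def by (simp add: sum.distrib case_prod_unfold)
  also have "\<dots> = - edge_disagreement E w y"
    unfolding edge_disagreement_def
    by (simp add: sum_negf[symmetric] case_prod_unfold power2_eq_square algebra_simps)
  finally show ?thesis .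
qed

lemma sum_nbrs_weights_le_quarter:
  assumes "E \<subseteq> {..<n} \<times> {..<n}" "\<forall>i. (i,i) \<notin> E" "i < n"
    and "\<forall>i j. (i,j) \<in> E \<longrightarrow> w i j \<le> 1 / (4 * (real n - 1))"
  shows "(\<Sum>j\<in>nbrs E i. w i j) \<le> 1/4"
proof -
  have sub: "nbrs E i \<subseteq> {..<n} - {i}"
    using assms(1,2) by (auto simp: nbrs_def)
  have "(\<Sum>j\<in>nbrs E i. w i j) \<le> real (card (nbrs E i)) * (1 / (4 * (real n - 1)))"
    using sum_bounded_above[of "nbrs E i" "w i" "1 / (4 * (real n - 1))"] assms(4)
    by (auto simp: nbrs_def)
  also have "real (card (nbrs E i)) \<le> real n - 1"
    using card_mono[OF _ sub] assms(3) by simp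
  then have "real (card (nbrs E i)) * (1 / (4 * (real n - 1))) \<le> 1/4"
    by (cases "real n - 1 = 0") (auto simp: field_simps)
  finally show ?thesis .
qed

lemma consensus_step_sum_eq:
  fixes y y' :: "nat \<Rightarrow> real"
  assumes "E \<subseteq> {..<n} \<times> {..<n}" "\<forall>i j. (i,j) \<in> E \<longrightarrow> (j,i) \<in> E"
    and "\<forall>i j. (i,j) \<in> E \<longrightarrow> w i j = w j i"
    and "\<forall>i<n. y' i = y i + (\<Sum>j\<in>nbrs E i. w i j * (y j - y i))"
  shows "(\<Sum>i<n. y' i) = (\<Sum>i<n. y i)"
proof -
  have "(\<Sum>i<n. \<Sum>j\<in>nbrs E i. w i j * (y j - y i)) = 0"
    by (rule sum_nbrs_antisym_eq_0[OF assms(1,2)]) (metis assms(3) minus_diff_eq mult_minus_right)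
  then show ?thesis
    using assms(4) by (simp add: sum.distrib)
qed

lemma consensus_step_energy_decrease:
  fixes y y' :: "nat \<Rightarrow> real"
  assumes E: "E \<subseteq> {..<n} \<times> {..<n}" "\<forall>i j. (i,j) \<in> E \<longrightarrow> (j,i) \<in> E"
    and w_sym: "\<forall>i j. (i,j) \<in> E \<longrightarrow> w i j = w j i"
    and w_nonneg: "\<forall>i j. (i,j) \<in> E \<longrightarrow> 0 \<le> w i j"
    and w_rows: "\<forall>i<n. (\<Sum>j\<in>nbrs E i. w i j) \<le> 1/4"
    and step: "\<forall>i<n. y' i = y i + (\<Sum>j\<in>nbrs E i. w i j * (y j - y i))"
  shows "(\<Sum>i<n. (y' i)\<^sup>2) + 3/4 * edge_disagreement E w y \<le> (\<Sum>i<n. (y i)\<^sup>2)"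
proof -
  define u where "u i = (\<Sum>j\<in>nbrs E i. w i j * (y j - y i))" for i
  have "(\<Sum>i<n. (y' i)\<^sup>2) = (\<Sum>i<n. (y i + u i)\<^sup>2)"
    using step by (simp add: u_def)
  also have "\<dots> = (\<Sum>i<n. (y i)\<^sup>2) + 2 * (\<Sum>i<n. y i * u i) + (\<Sum>i<n. (u i)\<^sup>2)"
    by (simp add: power2_sum sum.distrib sum_distrib_left algebra_simps)
  also have "2 * (\<Sum>i<n. y i * u i) = - edge_disagreement E w y"
    unfolding u_def by (rule sum_nbrs_laplacian_quadratic_form[OF E w_sym])
  finally have expand: "(\<Sum>i<n. (y' i)\<^sup>2)
      = (\<Sum>i<n. (y i)\<^sup>2) - edge_disagreement E w y + (\<Sum>i<n. (u i)\<^sup>2)" by simp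
  have "(u i)\<^sup>2 \<le> 1/4 * (\<Sum>j\<in>nbrs E i. w i j * (y i - y j)\<^sup>2)" if "i < n" for i
  proof -
    have "(u i)\<^sup>2 \<le> (\<Sum>j\<in>nbrs E i. w i j) * (\<Sum>j\<in>nbrs E i. w i j * (y i - y j)\<^sup>2)"
      unfolding u_def power2_commute[of "y i"]
      by (rule weighted_Cauchy_Schwarz) (use w_nonneg in \<open>auto simp: nbrs_def\<close>)
    also have "\<dots> \<le> 1/4 * (\<Sum>j\<in>nbrs E i. w i j * (y i - y j)\<^sup>2)"
      using w_rows that w_nonneg by (intro mult_right_mono sum_nonneg) (auto simp: nbrs_def)
    finally show ?thesis .
  qed
  then have "(\<Sum>i<n. (u i)\<^sup>2) \<le> 1/4 * (\<Sum>i<n. \<Sum>j\<in>nbrs E i. w i j * (y i - y j)\<^sup>2)"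
    by (auto simp: sum_distrib_left intro: sum_mono)
  also have "\<dots> = 1/4 * edge_disagreement E w y"
    unfolding edge_disagreement_def sum_nbrs_eq_sum_edges[OF E(1)] ..
  finally show ?thesis
    using expand by linarith
qed

lemma energy_decrease_tendsto_zero:
  fixes V Q :: "nat \<Rightarrow> real"
  assumes "\<forall>k. 0 \<le> V k" "\<forall>k. 0 \<le> Q k" "\<forall>k. V (Suc k) + Q k \<le> V k"
  shows "convergent V" "Q \<longlonglongrightarrow> 0"
proof -
  have "V (Suc k) \<le> V k" for k
    using assms(2,3)[rule_format, of k] by linarith
  then have "decseq V"
    by (simp add: decseq_Suc_iff)
  then obtain L where VL: "V \<longlonglongrightarrow> L"
    using decseq_convergent[of V 0] assms(1) by blast
  then show "convergent V"
    by (rule convergentI)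
  have "(\<lambda>k. V k - V (Suc k)) \<longlonglongrightarrow> L - L"
    by (intro tendsto_diff VL LIMSEQ_Suc)
  then have "(\<lambda>k. V k - V (Suc k)) \<longlonglongrightarrow> 0"
    by simp
  show "Q \<longlonglongrightarrow> 0"
    by (rule tendsto_sandwich[OF _ _ tendsto_const \<open>(\<lambda>k. V k - V (Suc k)) \<longlonglongrightarrow> 0\<close>])
      (use assms in \<open>auto simp: algebra_simps\<close>)
qed

lemma tendsto_diff_along_rtrancl:
  assumes "\<forall>i j. (i,j) \<in> E \<longrightarrow> ((\<lambda>k. y k i - y k j) \<longlongrightarrow> (0::real)) F"
    and "(i,j) \<in> E\<^sup>*"
  shows "((\<lambda>k. y k i - y k j) \<longlongrightarrow> 0) F"
  using assms(2)
proof (induction rule: rtrancl_induct)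
  case (step b c)
  from tendsto_add[OF step.IH assms(1)[rule_format, OF step.hyps(2)]] show ?case
    by simp
qed simp

lemma tendsto_average_if_diff_tendsto_zero:
  assumes "\<forall>i<n. \<forall>j<n. ((\<lambda>k. y k i - y k j) \<longlongrightarrow> 0) F"
    and "\<forall>k. (\<Sum>j<n. y k j) = real n * a" and "i < n"
  shows "((\<lambda>k. y k i) \<longlongrightarrow> (a::real)) F"
proof -
  have "y k i = a + (1 / real n) * (\<Sum>j<n. y k i - y k j)" for k
    using assms(2)[rule_format, of k] assms(3) by (simp add: sum_subtractf field_simps)
  moreover have "((\<lambda>k. a + (1 / real n) * (\<Sum>j<n. y k i - y k j)) \<longlongrightarrow> a + (1 / real n) * (\<Sum>j<n. 0)) F"
    using assms(1,3) by (intro tendsto_intros) auto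
  ultimately show ?thesis
    by simp
qed

locale symmetric_consensus =
  fixes n :: nat and E :: "(nat \<times> nat) set"
    and w :: "nat \<Rightarrow> nat \<Rightarrow> nat \<Rightarrow> real" and y :: "nat \<Rightarrow> nat \<Rightarrow> real"
  assumes graph: "undirected_connected n E"
    and w_sym: "\<forall>k i j. (i,j) \<in> E \<longrightarrow> w k i j = w k j i"
    and w_nonneg: "\<forall>k i j. (i,j) \<in> E \<longrightarrow> 0 \<le> w k i j"
    and w_le: "\<forall>k i j. (i,j) \<in> E \<longrightarrow> w k i j \<le> 1 / (4 * (real n - 1))"
    and step: "\<forall>k. \<forall>i<n. y (Suc k) i = y k i + (\<Sum>j\<in>nbrs E i. w k i j * (y k j - y k i))"
begin

lemma edges:
  "E \<subseteq> {..<n} \<times> {..<n}" "\<forall>i j. (i,j) \<in> E \<longrightarrow> (j,i) \<in> E"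
  "\<forall>i. (i,i) \<notin> E" "\<forall>i<n. \<forall>j<n. (i,j) \<in> E\<^sup>*"
  using graph unfolding undirected_connected_def by auto

definition average :: real where
  "average = (1 / real n) * (\<Sum>j<n. y 0 j)"

definition deviation :: "nat \<Rightarrow> real" where
  "deviation k = (\<Sum>j<n. (y k j - average)\<^sup>2)"

lemma sum_eq_average: "(\<Sum>j<n. y k j) = real n * average"
proof (induction k)
  case (Suc k)
  have "(\<Sum>j<n. y (Suc k) j) = (\<Sum>j<n. y k j)"
    by (rule consensus_step_sum_eq[OF edges(1,2), where w = "w k"]) (use w_sym step in auto)
  with Suc show ?case
    by simp
qed (cases "n = 0"; simp add: average_def)

lemma deviation_decrease:
  "deviation (Suc k) + 3/4 * edge_disagreement E (w k) (y k) \<le> deviation k"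
proof -
  have "\<forall>i j. (i,j) \<in> E \<longrightarrow> w k i j = w k j i" "\<forall>i j. (i,j) \<in> E \<longrightarrow> 0 \<le> w k i j"
    using w_sym w_nonneg by blast+
  moreover have "\<forall>i<n. (\<Sum>j\<in>nbrs E i. w k i j) \<le> 1/4"
    using sum_nbrs_weights_le_quarter[OF edges(1,3)] w_le by blast
  moreover have "\<forall>i<n. y (Suc k) i - average
      = (y k i - average) + (\<Sum>j\<in>nbrs E i. w k i j * ((y k j - average) - (y k i - average)))"
    using step by simp
  ultimately have "deviation (Suc k) + 3/4 * edge_disagreement E (w k) (\<lambda>j. y k j - average)
      \<le> deviation k"
    unfolding deviation_def by (rule consensus_step_energy_decrease[OF edges(1,2)])
  moreover have "edge_disagreement E (w k) (\<lambda>j. y k j - average) = edge_disagreement E (w k) (y k)"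
    by (simp add: edge_disagreement_def)
  ultimately show ?thesis
    by simp
qed

lemma deviation_convergent: "convergent deviation"
  and disagreement_tendsto_zero: "(\<lambda>k. edge_disagreement E (w k) (y k)) \<longlonglongrightarrow> 0"
proof -
  have "\<forall>k. 0 \<le> deviation k"
    unfolding deviation_def by (simp add: sum_nonneg)
  moreover have "\<forall>k. 0 \<le> 3/4 * edge_disagreement E (w k) (y k)"
    using edge_disagreement_nonneg w_nonneg by simp
  moreover have "\<forall>k. deviation (Suc k) + 3/4 * edge_disagreement E (w k) (y k) \<le> deviation k"
    using deviation_decrease by blast
  ultimately have "convergent deviation" "(\<lambda>k. 3/4 * edge_disagreement E (w k) (y k)) \<longlonglongrightarrow> 0"
    by (rule energy_decrease_tendsto_zero)+
  from this(1) tendsto_mult_right_zero[OF this(2), of "4/3"]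
  show "convergent deviation" "(\<lambda>k. edge_disagreement E (w k) (y k)) \<longlonglongrightarrow> 0"
    by simp_all
qed

lemma tendsto_average_along:
  fixes g :: "nat \<Rightarrow> nat"
  assumes g: "strict_mono g" and eps: "\<epsilon> > 0"
    and w_ge: "\<forall>m i j. (i,j) \<in> E \<longrightarrow> \<epsilon> \<le> w (g m) i j" and "i < n"
  shows "(\<lambda>m. y (g m) i) \<longlonglongrightarrow> average"
proof -
  have "finite E"
    using edges(1) by (rule finite_subset) auto
  have Q0: "(\<lambda>m. edge_disagreement E (w (g m)) (y (g m)) / \<epsilon>) \<longlonglongrightarrow> 0"
    using tendsto_divide_zero[OF LIMSEQ_subseq_LIMSEQ[OF disagreement_tendsto_zero g]]
    by (simp add: comp_def)
  have edge_lim: "(\<lambda>m. y (g m) i - y (g m) j) \<longlonglongrightarrow> 0" if "(i,j) \<in> E" for i j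
  proof -
    have "\<epsilon> * (y (g m) i - y (g m) j)\<^sup>2 \<le> edge_disagreement E (w (g m)) (y (g m))" for m
    proof -
      have "\<epsilon> * (y (g m) i - y (g m) j)\<^sup>2 \<le> w (g m) i j * (y (g m) i - y (g m) j)\<^sup>2"
        using w_ge that by (simp add: mult_right_mono)
      also have "\<dots> \<le> edge_disagreement E (w (g m)) (y (g m))"
        by (rule edge_disagreement_ge_edge[OF \<open>finite E\<close> that]) (use w_nonneg in simp)
      finally show ?thesis .
    qed
    then have "(y (g m) i - y (g m) j)\<^sup>2 \<le> edge_disagreement E (w (g m)) (y (g m)) / \<epsilon>" for m
      using eps by (simp add: field_simps)
    then have "(\<lambda>m. (y (g m) i - y (g m) j)\<^sup>2) \<longlonglongrightarrow> 0"
      by (intro tendsto_sandwich[OF _ _ tendsto_const Q0] always_eventually allI) auto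
    then show ?thesis
      by simp
  qed
  have "\<forall>i<n. \<forall>j<n. (\<lambda>m. y (g m) i - y (g m) j) \<longlonglongrightarrow> 0"
    using tendsto_diff_along_rtrancl[of E "\<lambda>m. y (g m)"] edge_lim edges(4) by blast
  then show ?thesis
    by (rule tendsto_average_if_diff_tendsto_zero[where y = "\<lambda>m. y (g m)", OF _ _ \<open>i < n\<close>])
      (use sum_eq_average in auto)
qed

theorem tendsto_average:
  fixes g :: "nat \<Rightarrow> nat"
  assumes "strict_mono g" "\<epsilon> > 0" "\<forall>m i j. (i,j) \<in> E \<longrightarrow> \<epsilon> \<le> w (g m) i j" "i < n"
  shows "(\<lambda>k. y k i) \<longlonglongrightarrow> average"
proof -
  obtain L where L: "deviation \<longlonglongrightarrow> L"
    using deviation_convergent by (auto simp: convergent_def)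
  have "(\<lambda>m. deviation (g m)) \<longlonglongrightarrow> (\<Sum>j<n. (average - average)\<^sup>2)"
    unfolding deviation_def using tendsto_average_along[OF assms(1-3)] by (intro tendsto_intros) auto
  moreover have "(\<lambda>m. deviation (g m)) \<longlonglongrightarrow> L"
    using LIMSEQ_subseq_LIMSEQ[OF L assms(1)] by (simp add: comp_def)
  ultimately have deviation0: "deviation \<longlonglongrightarrow> 0"
    using L LIMSEQ_unique by fastforce
  have "(y k i - average)\<^sup>2 \<le> deviation k" for k
    unfolding deviation_def using assms(4) by (intro member_le_sum) auto
  then have "(\<lambda>k. (y k i - average)\<^sup>2) \<longlonglongrightarrow> 0"
    by (intro tendsto_sandwich[OF _ _ tendsto_const deviation0] always_eventually allI) auto
  then have "(\<lambda>k. (y k i - average) + average) \<longlonglongrightarrow> 0 + average"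
    by (intro tendsto_add[OF _ tendsto_const]) simp
  then show ?thesis
    by simp
qed

end

subsection \<open>Orthogonal bases and projections\<close>

lemma dotD_self_pos:
  assumes "c < D" "v c \<noteq> 0"
  shows "0 < dotD D v v"
  unfolding dotD_def using assms
  by (intro sum_pos2[of "{..<D}" c]) (auto simp: zero_less_mult_iff linorder_neq_iff)

lemma dotD_diff: "dotD D p (\<lambda>b. u b - w b) = dotD D p u - dotD D p w"
  unfolding dotD_def by (simp add: sum_subtractf right_diff_distrib)

lemma dotD_matvec_projM:
  "dotD D r (matvec D (\<lambda>a b. g * projM D p a b + z * projM D q a b) u)
     = g * dotD D r p * dotD D p u / dotD D p p + z * dotD D r q * dotD D q u / dotD D q q"
  unfolding matvec_def projM_def dotD_def
  by (simp add: sum.distrib sum_distrib_left sum_divide_distrib algebra_simps)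

lemma orthogonal_basis_resolution_of_identity:
  fixes v :: "nat \<Rightarrow> nat \<Rightarrow> real"
  assumes nonzero: "\<forall>l\<in>{1..D}. dotD D (v l) (v l) \<noteq> 0"
    and orth: "\<forall>l\<in>{1..D}. \<forall>m\<in>{1..D}. l \<noteq> m \<longrightarrow> dotD D (v l) (v m) = 0"
    and "c < D" "c' < D"
  shows "(\<Sum>l\<in>{1..D}. v l c * v l c' / dotD D (v l) (v l)) = (if c = c' then 1 else 0)"
proof -
  txt \<open>\<open>M * N = 1\<close> is the orthogonality of the \<open>v\<^sub>l\<close>; a one-sided inverse of a square matrix
    is two-sided.\<close>
  define M where "M = mat D D (\<lambda>(a,b). v (Suc a) b / dotD D (v (Suc a)) (v (Suc a)))"
  define N where "N = mat D D (\<lambda>(b,a). v (Suc a) b)"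
  have carrier: "M \<in> carrier_mat D D" "N \<in> carrier_mat D D"
    by (simp_all add: M_def N_def)
  have "M * N = 1\<^sub>m D"
  proof (rule eq_matI)
    fix a b assume "a < dim_row (1\<^sub>m D :: real mat)" "b < dim_col (1\<^sub>m D :: real mat)"
    then have "a < D" "b < D" by simp_all
    have "(M * N) $$ (a,b) = dotD D (v (Suc a)) (v (Suc b)) / dotD D (v (Suc a)) (v (Suc a))"
      using \<open>a < D\<close> \<open>b < D\<close>
      by (simp add: M_def N_def scalar_prod_def sum_divide_distrib atLeast0LessThan dotD_def)
    then show "(M * N) $$ (a,b) = 1\<^sub>m D $$ (a,b)"
      using nonzero orth \<open>a < D\<close> \<open>b < D\<close> by auto
  qed (simp_all add: M_def N_def)
  then have "N * M = 1\<^sub>m D"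
    by (rule mat_mult_left_right_inverse[OF carrier])
  moreover have "(N * M) $$ (c,c') = (\<Sum>a<D. v (Suc a) c * v (Suc a) c' / dotD D (v (Suc a)) (v (Suc a)))"
    using assms(3,4) by (simp add: M_def N_def scalar_prod_def atLeast0LessThan)
  ultimately show ?thesis
    using assms(3,4) by (simp add: sum.atLeast1_atMost_eq)
qed

lemma orthogonal_basis_expansion:
  fixes v :: "nat \<Rightarrow> nat \<Rightarrow> real"
  assumes "\<forall>l\<in>{1..D}. dotD D (v l) (v l) \<noteq> 0"
    and "\<forall>l\<in>{1..D}. \<forall>m\<in>{1..D}. l \<noteq> m \<longrightarrow> dotD D (v l) (v m) = 0"
    and "c < D"
  shows "(\<Sum>l\<in>{1..D}. v l c / dotD D (v l) (v l) * dotD D (v l) w) = w c"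
proof -
  have "(\<Sum>l\<in>{1..D}. v l c / dotD D (v l) (v l) * dotD D (v l) w)
      = (\<Sum>l\<in>{1..D}. \<Sum>c'<D. v l c * v l c' / dotD D (v l) (v l) * w c')"
    unfolding dotD_def by (simp add: sum_distrib_left mult.assoc)
  also have "\<dots> = (\<Sum>c'<D. (\<Sum>l\<in>{1..D}. v l c * v l c' / dotD D (v l) (v l)) * w c')"
    unfolding sum_distrib_right by (rule sum.swap)
  also have "\<dots> = (\<Sum>c'<D. if c = c' then w c' else 0)"
    using orthogonal_basis_resolution_of_identity[OF assms] by (intro sum.cong) auto
  also have "\<dots> = w c"
    using assms(3) by (simp add: sum.delta)
  finally show ?thesis .
qed

lemma rho_in_range:
  assumes "dstar > 0"
  shows "rho dstar k \<in> {1..dstar}"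
  using mod_less_divisor[OF assms, of k] assms unfolding rho_def by auto

lemma rho_mult_add:
  assumes "l \<in> {1..dstar}"
  shows "rho dstar (m * dstar + l) = l"
  using assms by (cases "l = dstar") (auto simp: rho_def)

subsection \<open>The lifted system\<close>

locale lifted_consensus =
  fixes n D :: nat and E :: "(nat \<times> nat) set" and \<sigma> :: real and v :: "nat \<Rightarrow> nat \<Rightarrow> real"
    and A :: "nat \<Rightarrow> nat \<Rightarrow> nat \<Rightarrow> nat \<Rightarrow> nat \<Rightarrow> real"
    and \<gamma> \<zeta> :: "nat \<Rightarrow> nat \<Rightarrow> nat \<Rightarrow> real" and x :: "nat \<Rightarrow> nat \<Rightarrow> nat \<Rightarrow> real"
  assumes graph: "undirected_connected n E"
    and D_ge2: "D \<ge> 2"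
    and sigma_pos: "\<sigma> > 0"
    and v_nonzero: "\<forall>l\<in>{1..D}. \<exists>c<D. v l c \<noteq> 0"
    and v_orth: "\<forall>l\<in>{1..D}. \<forall>m\<in>{1..D}. l \<noteq> m \<longrightarrow> dotD D (v l) (v m) = 0"
    and A0_sym: "\<forall>i j. (i,j) \<in> E \<longrightarrow> A 0 i j = A 0 j i"
    and A_dyn: "\<forall>k\<ge>1. \<forall>i j. (i,j) \<in> E \<longrightarrow>
                  A k i j = (\<lambda>a b. \<gamma> (rho (D - 1) k) i j * projM D (v (rho (D - 1) k)) a b
                                  + \<zeta> (rho (D - 1) k) i j * projM D (v D) a b)"
    and gz_sym: "\<forall>r i j. \<gamma> r i j = \<gamma> r j i \<and> \<zeta> r i j = \<zeta> r j i"
    and gz_bounds: "\<forall>r\<in>{1..D - 1}. \<forall>i j. (i,j) \<in> E \<longrightarrow>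
                  0 < \<gamma> r i j \<and> \<gamma> r i j < 1 / (4 * (real n - 1) * \<sigma>) \<and>
                  0 < \<zeta> r i j \<and> \<zeta> r i j < 1 / (4 * (real n - 1) * \<sigma>)"
    and update: "\<forall>k. \<forall>i<n. \<forall>c<D.
                  x (Suc k) i c = x k i c + \<sigma> * (\<Sum>j\<in>nbrs E i.
                      matvec D (A k i j) (\<lambda>b. x k j b - x k i b) c)"
begin

lemma edges: "E \<subseteq> {..<n} \<times> {..<n}" "\<forall>i j. (i,j) \<in> E \<longrightarrow> (j,i) \<in> E"
  using graph unfolding undirected_connected_def by auto

lemma dotD_v_self_nonzero: "\<forall>l\<in>{1..D}. dotD D (v l) (v l) \<noteq> 0"
  using v_nonzero dotD_self_pos by (metis less_irrefl)

lemma rho_lt_D: "rho (D - 1) k \<in> {1..D - 1}"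
  using rho_in_range[of "D - 1"] D_ge2 by simp

text \<open>The weight with which the coordinate along \<open>v\<^sub>l\<close> is averaged at step \<open>k \<ge> 1\<close>.\<close>

definition proj_weight :: "nat \<Rightarrow> nat \<Rightarrow> nat \<Rightarrow> nat \<Rightarrow> real" where
  "proj_weight l k i j = (if l = rho (D - 1) k then \<gamma> (rho (D - 1) k) i j else 0)
     + (if l = D then \<zeta> (rho (D - 1) k) i j else 0)"

lemma proj_weight_bounds:
  assumes "(i,j) \<in> E"
  shows "0 \<le> \<sigma> * proj_weight l k i j" "\<sigma> * proj_weight l k i j \<le> 1 / (4 * (real n - 1))"
proof -
  define r where "r = rho (D - 1) k"
  have "i < n" "j < n" "i \<noteq> j"
    using assms graph unfolding undirected_connected_def by auto
  then have "real n - 1 > 0"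
    by linarith
  have r: "r \<in> {1..D - 1}" "r \<noteq> D"
    using rho_lt_D[of k] unfolding r_def by auto
  then have "proj_weight l k i j \<in> {0, \<gamma> r i j, \<zeta> r i j}"
    unfolding proj_weight_def r_def[symmetric] by auto
  then have "0 \<le> proj_weight l k i j \<and> proj_weight l k i j \<le> 1 / (4 * (real n - 1) * \<sigma>)"
    using gz_bounds r(1) assms \<open>real n - 1 > 0\<close> sigma_pos by (auto simp: less_imp_le)
  then show "0 \<le> \<sigma> * proj_weight l k i j" "\<sigma> * proj_weight l k i j \<le> 1 / (4 * (real n - 1))"
    using sigma_pos mult_left_mono[of _ "1 / (4 * (real n - 1) * \<sigma>)" \<sigma>] by auto
qed

lemma dotD_v_matvec_A:
  assumes "k \<ge> 1" "(i,j) \<in> E" "l \<in> {1..D}"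
  shows "dotD D (v l) (matvec D (A k i j) u) = proj_weight l k i j * dotD D (v l) u"
proof -
  define r where "r = rho (D - 1) k"
  have r: "r \<in> {1..D}" "r \<noteq> D"
    using rho_lt_D[of k] unfolding r_def by auto
  have "dotD D (v l) (matvec D (A k i j) u) =
      \<gamma> r i j * dotD D (v l) (v r) * dotD D (v r) u / dotD D (v r) (v r)
      + \<zeta> r i j * dotD D (v l) (v D) * dotD D (v D) u / dotD D (v D) (v D)"
    using A_dyn assms(1,2) by (simp add: r_def dotD_matvec_projM)
  then show ?thesis
    using v_orth dotD_v_self_nonzero assms(3) r D_ge2
    unfolding proj_weight_def r_def[symmetric] by (auto split: if_splits)
qed

lemma dotD_v_update:
  assumes "k \<ge> 1" "i < n" "l \<in> {1..D}"
  shows "dotD D (v l) (x (Suc k) i) = dotD D (v l) (x k i)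
      + (\<Sum>j\<in>nbrs E i. \<sigma> * proj_weight l k i j * (dotD D (v l) (x k j) - dotD D (v l) (x k i)))"
proof -
  have "dotD D (v l) (x (Suc k) i) = dotD D (v l) (x k i)
      + \<sigma> * (\<Sum>j\<in>nbrs E i. dotD D (v l) (matvec D (A k i j) (\<lambda>b. x k j b - x k i b)))"
    using update assms(2) unfolding dotD_def
    by (simp add: distrib_left sum.distrib sum_distrib_left sum.swap[of _ "{..<D}"] mult.left_commute)
  also have "\<dots> = dotD D (v l) (x k i)
      + (\<Sum>j\<in>nbrs E i. \<sigma> * proj_weight l k i j * (dotD D (v l) (x k j) - dotD D (v l) (x k i)))"
    using dotD_v_matvec_A[OF assms(1) _ assms(3)]
    by (simp add: sum_distrib_left dotD_diff nbrs_def mult.assoc)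
  finally show ?thesis .
qed

lemma sum_x_first_step:
  assumes "c < D"
  shows "(\<Sum>i<n. x 1 i c) = (\<Sum>i<n. x 0 i c)"
proof -
  have "(\<Sum>i<n. \<Sum>j\<in>nbrs E i. matvec D (A 0 i j) (\<lambda>b. x 0 j b - x 0 i b) c) = 0"
  proof (rule sum_nbrs_antisym_eq_0[OF edges], intro allI impI)
    fix i j assume "(i,j) \<in> E"
    then have "A 0 j i = A 0 i j"
      using A0_sym by metis
    then show "matvec D (A 0 i j) (\<lambda>b. x 0 j b - x 0 i b) c
        = - matvec D (A 0 j i) (\<lambda>b. x 0 i b - x 0 j b) c"
      by (simp add: matvec_def sum_negf[symmetric] algebra_simps)
  qed
  then show ?thesis
    using update assms by (simp add: sum.distrib sum_distrib_left[symmetric])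
qed

text \<open>Persistent excitation: \<open>v\<^sub>D\<close> is active at every step, \<open>v\<^sub>l\<close> with \<open>l < D\<close> at the steps
  \<open>m (D - 1) + l\<close>.\<close>

lemma proj_weight_persistent:
  assumes "l \<in> {1..D}"
  obtains g :: "nat \<Rightarrow> nat" and \<epsilon> :: real where "strict_mono g" "\<epsilon> > 0"
    "\<forall>m i j. (i,j) \<in> E \<longrightarrow> \<epsilon> \<le> \<sigma> * proj_weight l (Suc (g m)) i j"
proof -
  define f where "f = (\<lambda>(r,i,j). min (\<sigma> * \<gamma> r i j) (\<sigma> * \<zeta> r i j))"
  have "finite E"
    using edges(1) by (rule finite_subset) simp
  then have "finite ({1..D - 1} \<times> E)"
    by simp
  moreover have "\<forall>s\<in>{1..D - 1} \<times> E. 0 < f s"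
    using gz_bounds sigma_pos by (auto simp: f_def)
  ultimately obtain \<epsilon> where eps: "\<epsilon> > 0" and eps_le: "\<forall>s\<in>{1..D - 1} \<times> E. \<epsilon> \<le> f s"
    using finite_positive_lower_bound by blast
  have eps_gz: "\<epsilon> \<le> \<sigma> * \<gamma> r i j" "\<epsilon> \<le> \<sigma> * \<zeta> r i j" if "r \<in> {1..D - 1}" "(i,j) \<in> E" for r i j
    using eps_le[rule_format, of "(r,i,j)"] that by (simp_all add: f_def)
  show ?thesis
  proof (cases "l = D")
    case True
    have "\<epsilon> \<le> \<sigma> * proj_weight l (Suc m) i j" if "(i,j) \<in> E" for m i j
      using eps_gz(2)[OF rho_lt_D that] rho_lt_D[of "Suc m"] True by (auto simp: proj_weight_def)
    then show ?thesis
      using that[of id \<epsilon>] eps by (simp add: strict_mono_def)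
  next
    case False
    with assms have l: "l \<in> {1..D - 1}" by auto
    then have "Suc (m * (D - 1) + l - 1) = m * (D - 1) + l" for m
      by simp
    then have "\<epsilon> \<le> \<sigma> * proj_weight l (Suc (m * (D - 1) + l - 1)) i j" if "(i,j) \<in> E" for m i j
      using eps_gz(1)[OF l that] rho_mult_add[OF l, of m] False by (simp add: proj_weight_def)
    moreover have "strict_mono (\<lambda>m. m * (D - 1) + l - 1)"
      using l by (auto simp: strict_mono_Suc_iff)
    ultimately show ?thesis
      using that eps by blast
  qed
qed

lemma dotD_v_tendsto_average:
  assumes "l \<in> {1..D}" "i < n"
  shows "(\<lambda>k. dotD D (v l) (x k i)) \<longlonglongrightarrow> dotD D (v l) (\<lambda>c. (1 / real n) * (\<Sum>j<n. x 0 j c))"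
proof -
  interpret scalar: symmetric_consensus n E "\<lambda>k i j. \<sigma> * proj_weight l (Suc k) i j"
    "\<lambda>k i. dotD D (v l) (x (Suc k) i)"
  proof
    show "\<forall>k i j. (i,j) \<in> E \<longrightarrow> \<sigma> * proj_weight l (Suc k) i j = \<sigma> * proj_weight l (Suc k) j i"
      using gz_sym by (simp add: proj_weight_def)
    show "\<forall>k i j. (i,j) \<in> E \<longrightarrow> 0 \<le> \<sigma> * proj_weight l (Suc k) i j"
      "\<forall>k i j. (i,j) \<in> E \<longrightarrow> \<sigma> * proj_weight l (Suc k) i j \<le> 1 / (4 * (real n - 1))"
      using proj_weight_bounds by blast+
    show "\<forall>k. \<forall>i<n. dotD D (v l) (x (Suc (Suc k)) i) = dotD D (v l) (x (Suc k) i)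
        + (\<Sum>j\<in>nbrs E i. \<sigma> * proj_weight l (Suc k) i j
            * (dotD D (v l) (x (Suc k) j) - dotD D (v l) (x (Suc k) i)))"
      using dotD_v_update[OF _ _ assms(1)] by simp
  qed (rule graph)
  obtain g :: "nat \<Rightarrow> nat" and \<epsilon> :: real where "strict_mono g" "\<epsilon> > 0"
    "\<forall>m i j. (i,j) \<in> E \<longrightarrow> \<epsilon> \<le> \<sigma> * proj_weight l (Suc (g m)) i j"
    using proj_weight_persistent[OF assms(1)] .
  then have "(\<lambda>k. dotD D (v l) (x (Suc k) i)) \<longlonglongrightarrow> scalar.average"
    using scalar.tendsto_average assms(2) by blast
  moreover have "(\<Sum>j<n. dotD D (v l) (x 1 j)) = (\<Sum>c<D. v l c * (\<Sum>j<n. x 1 j c))"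
    unfolding dotD_def sum_distrib_left by (rule sum.swap)
  then have "scalar.average = dotD D (v l) (\<lambda>c. (1 / real n) * (\<Sum>j<n. x 0 j c))"
    unfolding scalar.average_def
    using sum_x_first_step by (simp add: dotD_def sum_divide_distrib[of _ "{..<D}"])
  ultimately show ?thesis
    by (auto intro: LIMSEQ_imp_Suc)
qed

theorem average_consensus:
  assumes "i < n" "c < D"
  shows "(\<lambda>k. x k i c) \<longlonglongrightarrow> (1 / real n) * (\<Sum>j<n. x 0 j c)"
proof -
  have "(\<lambda>k. \<Sum>l\<in>{1..D}. v l c / dotD D (v l) (v l) * dotD D (v l) (x k i))
      \<longlonglongrightarrow> (\<Sum>l\<in>{1..D}. v l c / dotD D (v l) (v l)
                            * dotD D (v l) (\<lambda>c. (1 / real n) * (\<Sum>j<n. x 0 j c)))"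
    using dotD_v_tendsto_average assms(1) by (intro tendsto_intros) auto
  then show ?thesis
    unfolding orthogonal_basis_expansion[OF dotD_v_self_nonzero v_orth assms(2)] .
qed

end

theorem mainTheorem1:
  fixes n d d' D :: nat
    and E :: "(nat \<times> nat) set"
    and H :: "nat set"  \<comment> \<open>honest-but-curious agents; the others in {..<n} are legitimate\<close>
    and \<sigma> :: real
    and v :: "nat \<Rightarrow> nat \<Rightarrow> real"   \<comment> \<open>v l = auxiliary vector v_l, l = 1..D\<close>
    and A :: "nat \<Rightarrow> nat \<Rightarrow> nat \<Rightarrow> nat \<Rightarrow> nat \<Rightarrow> real"  \<comment> \<open>A k i j = weight matrix A_ij(k)\<close>
    and \<alpha> \<beta> :: "nat \<Rightarrow> nat \<Rightarrow> real"
    and \<gamma> \<zeta> :: "nat \<Rightarrow> nat \<Rightarrow> nat \<Rightarrow> real"  \<comment> \<open>\<gamma> r i j = gamma_ij^r\<close>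
    and x :: "nat \<Rightarrow> nat \<Rightarrow> nat \<Rightarrow> real"  \<comment> \<open>x k i c = c-th coordinate of x_i(k)\<close>
  assumes n_gt1: "n > 1"
    and graph: "undirected_connected n E"
    and H_sub: "H \<subseteq> {..<n}"
    and d'_ge3: "d' \<ge> 3"
    and D_def: "D = d + d'"
    and sigma_pos: "\<sigma> > 0"
    and v_nonzero: "\<forall>l\<in>{1..D}. \<exists>c<D. v l c \<noteq> 0"
    and v_orth: "\<forall>l\<in>{1..D}. \<forall>m\<in>{1..D}. l \<noteq> m \<longrightarrow> dotD D (v l) (v m) = 0"
    and v_nnz2: "\<forall>l\<in>{1..D}. nnz D (v l) \<ge> 2"
    and v1_nnz: "nnz D (v 1) < d'"
    and vD_full: "\<forall>c<D. v D c \<noteq> 0"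
    and A0_sym: "\<forall>i j. (i,j) \<in> E \<longrightarrow> A 0 i j = A 0 j i"
    and A0_LH: "\<forall>i j. (i,j) \<in> E \<longrightarrow>
                  ((i \<notin> H \<and> j \<in> H) \<or> (i \<in> H \<and> j \<notin> H)) \<longrightarrow>
                  \<alpha> i j > 0 \<and> \<beta> i j > 0 \<and>
                  A 0 i j = (\<lambda>a b. \<alpha> i j * projM D (v 1) a b + \<beta> i j * projM D (v D) a b)"
    and A_nonedge: "\<forall>k i j. (i,j) \<notin> E \<longrightarrow> A k i j = (\<lambda>a b. 0)"
    and A_dyn: "\<forall>k\<ge>1. \<forall>i j. (i,j) \<in> E \<longrightarrow>
                  A k i j = (\<lambda>a b. \<gamma> (rho (D - 1) k) i j * projM D (v (rho (D - 1) k)) a b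
                                  + \<zeta> (rho (D - 1) k) i j * projM D (v D) a b)"
    and gz_sym: "\<forall>r i j. \<gamma> r i j = \<gamma> r j i \<and> \<zeta> r i j = \<zeta> r j i"
    and gz_bounds: "\<forall>r\<in>{1..D - 1}. \<forall>i j. (i,j) \<in> E \<longrightarrow>
                  0 < \<gamma> r i j \<and> \<gamma> r i j < 1 / (4 * (real n - 1) * \<sigma>) \<and>
                  0 < \<zeta> r i j \<and> \<zeta> r i j < 1 / (4 * (real n - 1) * \<sigma>)"
    and update: "\<forall>k. \<forall>i<n. \<forall>c<D.
                  x (Suc k) i c = x k i c + \<sigma> * (\<Sum>j\<in>nbrs E i.
                      matvec D (A k i j) (\<lambda>b. x k j b - x k i b) c)"
  shows "\<forall>i<n. \<forall>c<D. (\<lambda>k. x k i c) \<longlonglongrightarrow> (1 / real n) * (\<Sum>j<n. x 0 j c)"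
proof -
  interpret lifted_consensus n D E \<sigma> v A \<gamma> \<zeta> x
    using graph d'_ge3 D_def sigma_pos v_nonzero v_orth A0_sym A_dyn gz_sym gz_bounds update
    by unfold_locales auto
  show ?thesis
    using average_consensus by blast
qed

end
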